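(* Let $P\subseteq\mathbb{R}^d$ be a $d$-dimensional polytope and let $v_1,\dots,v_k$ be Fine core normals of $P$. Let $v=\sum_{i=1}^k\lambda_i v_i\in(\mathbb{Z}^d)^*$ with $\lambda_1,\dots,\lambda_k\ge 0$, $\sum_{i=1}^k\lambda_i\le 1$ and $v\neq 0$. Then $v$ is also a Fine core normal of $P$.
   Context: For a $d$-dimensional rational polytope $P\subseteq\mathbb{R}^d$ and $a\in(\mathbb{Z}^d)^*$ let $h_P(a)=\min_{x\in P}\langle a,x\rangle$. For $s>0$ the Fine adjoint polytope is $P^{F(s)}=\{x\in\mathbb{R}^d : \langle a,x\rangle\ge h_P(a)+s \text{ for all } a\in(\mathbb{Z}^d)^*\setminus\{0\}\}$. The Fine $\mathbb{Q}$-codegree is $\mu^F(P)=(\sup\{s>0 : P^{F(s)}\neq\emptyset\})^{-1}$, the Fine number is $n^F(P)=1/\mu^F(P)$, and the Fine core is $\operatorname{core}^F(P)=P^{F(n^F(P))}$. A Fine core normal of $P$ is a nonzero $a\in(\mathbb{Z}^d)^*$ with $\langle a,y\rangle=h_P(a)+n^F(P)$ for all $y\in\operatorname{core}^F(P)$. *)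

theory Defs
  imports "HOL-Analysis.Analysis"
begin

text \<open>Integer (dual) lattice vectors (Z^d)^*, identified with integer vectors in R^d via the
  standard inner product.\<close>
definition int_vec :: "real^'n \<Rightarrow> bool" where
  "int_vec a \<longleftrightarrow> (\<forall>i. a $ i \<in> \<int>)"

definition support_h :: "(real^'n) set \<Rightarrow> real^'n \<Rightarrow> real" where
  "support_h P a = Inf ((\<lambda>x. a \<bullet> x) ` P)"

definition fine_adjoint :: "(real^'n) set \<Rightarrow> real \<Rightarrow> (real^'n) set" where
  "fine_adjoint P s = {x. \<forall>a. int_vec a \<and> a \<noteq> 0 \<longrightarrow> a \<bullet> x \<ge> support_h P a + s}"

definition fine_codegree :: "(real^'n) set \<Rightarrow> real" where
  "fine_codegree P = inverse (Sup {s. s > 0 \<and> fine_adjoint P s \<noteq> {}})"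

definition fine_number :: "(real^'n) set \<Rightarrow> real" where
  "fine_number P = 1 / fine_codegree P"

definition fine_core :: "(real^'n) set \<Rightarrow> (real^'n) set" where
  "fine_core P = fine_adjoint P (fine_number P)"

definition fine_core_normal :: "(real^'n) set \<Rightarrow> real^'n \<Rightarrow> bool" where
  "fine_core_normal P a \<longleftrightarrow> int_vec a \<and> a \<noteq> 0 \<and>
     (\<forall>y\<in>fine_core P. a \<bullet> y = support_h P a + fine_number P)"

end

theory Submission
  imports Defs
begin

(* Let v = sum lam_i v_i. For y in the Fine core, each core normal v_i satisfies v_i . y = h(v_i) + n, hence
   v . y = sum lam_i h(v_i) + (sum lam_i) n. The support function h is superadditive and positively
   homogeneous and the Fine number n is positive, so v . y <= h(v) + n; the reverse inequality
   holds for every nonzero integer vector by definition of the core. *)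

lemma support_h_le_inner:
  assumes "bounded P" and "x \<in> P"
  shows "support_h P a \<le> a \<bullet> x"
proof -
  have "bdd_below ((\<lambda>x. x \<bullet> a) ` P)"
    using assms(1) by (rule bounded_inner_imp_bdd_below)
  then show ?thesis
    unfolding support_h_def using assms(2) by (auto simp: inner_commute intro: cInf_lower)
qed

lemma sum_scaleR_support_h_le:
  assumes "bounded P" and "P \<noteq> {}" and "\<And>i. i \<in> I \<Longrightarrow> lam i \<ge> 0"
  shows "(\<Sum>i\<in>I. lam i * support_h P (vs i)) \<le> support_h P (\<Sum>i\<in>I. lam i *\<^sub>R vs i)"
  unfolding support_h_def[of P "\<Sum>i\<in>I. lam i *\<^sub>R vs i"]
proof (rule cInf_greatest)
  show "(\<lambda>x. (\<Sum>i\<in>I. lam i *\<^sub>R vs i) \<bullet> x) ` P \<noteq> {}"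
    using assms(2) by blast
next
  fix m assume "m \<in> (\<lambda>x. (\<Sum>i\<in>I. lam i *\<^sub>R vs i) \<bullet> x) ` P"
  then obtain x where "x \<in> P" and m: "m = (\<Sum>i\<in>I. lam i * (vs i \<bullet> x))"
    by (auto simp: inner_sum_left)
  have "(\<Sum>i\<in>I. lam i * support_h P (vs i)) \<le> (\<Sum>i\<in>I. lam i * (vs i \<bullet> x))"
    using assms(3) support_h_le_inner[OF assms(1) \<open>x \<in> P\<close>]
    by (intro sum_mono mult_left_mono) auto
  then show "(\<Sum>i\<in>I. lam i * support_h P (vs i)) \<le> m"
    using m by simp
qed

lemma full_dim_inner_constant_imp_zero:
  fixes P :: "'a::euclidean_space set"
  assumes "aff_dim P = DIM('a)" and "\<And>x. x \<in> P \<Longrightarrow> a \<bullet> x = c"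
  shows "a = 0"
proof -
  have "UNIV = affine hull P"
    using assms(1) aff_dim_eq_full by blast
  also have "\<dots> \<subseteq> {x. a \<bullet> x = c}"
    using assms(2) affine_hyperplane by (intro hull_minimal) auto
  finally have "a \<bullet> x = c" for x
    by blast
  then show ?thesis
    by (metis inner_eq_zero_iff inner_zero_right)
qed

lemma fine_core_inner_ge:
  assumes "y \<in> fine_core P" and "int_vec a" and "a \<noteq> 0"
  shows "support_h P a + fine_number P \<le> a \<bullet> y"
  using assms unfolding fine_core_def fine_adjoint_def by blast

(* If the Fine number were not positive, every point of P would lie in the core, so a core
   normal would be constant on the full-dimensional P. *)

lemma fine_number_pos:
  fixes P :: "(real^'n) set"
  assumes "bounded P" and "aff_dim P = int CARD('n)" and "fine_core_normal P a"
  shows "fine_number P > 0"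
proof (rule ccontr)
  assume "\<not> fine_number P > 0"
  then have "P \<subseteq> fine_core P"
    using support_h_le_inner[OF assms(1)]
    unfolding fine_core_def fine_adjoint_def by (fastforce intro: add_decreasing2)
  then have "a \<bullet> x = support_h P a + fine_number P" if "x \<in> P" for x
    using assms(3) that unfolding fine_core_normal_def by blast
  then have "a = 0"
    using assms(2) by (intro full_dim_inner_constant_imp_zero) auto
  then show False
    using assms(3) unfolding fine_core_normal_def by blast
qed

theorem mainTheorem3:
  fixes P :: "(real^'n) set" and k :: nat
    and vs :: "nat \<Rightarrow> real^'n" and lam :: "nat \<Rightarrow> real"
  assumes "polytope P" and "aff_dim P = int CARD('n)"
    and "\<And>i. i < k \<Longrightarrow> fine_core_normal P (vs i)"
    and "\<And>i. i < k \<Longrightarrow> lam i \<ge> 0"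
    and "(\<Sum>i<k. lam i) \<le> 1"
    and "int_vec (\<Sum>i<k. lam i *\<^sub>R vs i)"
    and "(\<Sum>i<k. lam i *\<^sub>R vs i) \<noteq> 0"
  shows "fine_core_normal P (\<Sum>i<k. lam i *\<^sub>R vs i)"
proof -
  define v where "v = (\<Sum>i<k. lam i *\<^sub>R vs i)"
  define n where "n = fine_number P"
  have "bounded P" and "P \<noteq> {}"
    using assms(1,2) polytope_imp_bounded by auto
  have "0 < k"
    using assms(7) by (cases k) auto
  then have "n > 0"
    unfolding n_def using fine_number_pos[OF \<open>bounded P\<close> assms(2) assms(3)] by blast
  have "v \<bullet> y = support_h P v + n" if "y \<in> fine_core P" for y
  proof (rule antisym)
    have "vs i \<bullet> y = support_h P (vs i) + n" if "i < k" for i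
      using assms(3)[OF that] \<open>y \<in> fine_core P\<close> unfolding fine_core_normal_def n_def by blast
    then have "v \<bullet> y = (\<Sum>i<k. lam i * support_h P (vs i)) + (\<Sum>i<k. lam i) * n"
      unfolding v_def by (simp add: inner_sum_left distrib_left sum.distrib sum_distrib_right)
    also have "\<dots> \<le> support_h P v + n"
      using sum_scaleR_support_h_le[OF \<open>bounded P\<close> \<open>P \<noteq> {}\<close>, of "{..<k}" lam vs] assms(4,5)
        \<open>n > 0\<close> unfolding v_def by (simp add: add_mono mult_left_le_one_le)
    finally show "v \<bullet> y \<le> support_h P v + n" .
    show "support_h P v + n \<le> v \<bullet> y"
      using fine_core_inner_ge[OF that] assms(6,7) unfolding v_def n_def by blast
  qed
  then show ?thesis
    unfolding fine_core_normal_def using assms(6,7) unfolding v_def n_def by blast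
qed

end
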